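(* Let $Q=\sum_{i\in I}E_{i,\sigma(i)}\in N_n$ be a subpermutation and let $A=[a_{ij}]\in QU_n$ be a Belitskii canonical form under $B_n$-similarity. If $a_{ij}\neq0$, then $i\in I=[n]\setminus S_h$ and one of the following holds: (1) $j=i^+$ (and then $a_{ij}=1$); (2) $j\in S_t\setminus S_h$ and $i^+<j$; (3) $j\notin S_t\cup S_h$ and $j^-<i<i^+<j$. In particular, for each $i\in I$ and each chain of $G_Q$ there is at most one vertex $j$ of that chain with $a_{ij}\neq0$.
   Context: $\mathbb F$ is a field; $[n]=\{1,\dots,n\}$. $B_n$ (resp. $U_n$, $N_n$) is the set of $n\times n$ invertible upper triangular (resp. upper triangular with diagonal entries $1$, strictly upper triangular) matrices over $\mathbb F$; $QU_n=\{QU:U\in U_n\}$; $E_{ij}$ is the matrix unit. A subpermutation is a matrix each of whose rows and columns has at most one nonzero entry, equal to $1$; here $I\subseteq[n]$ and $\sigma:I\to[n]$ is injective with $i<\sigma(i)$. $G_Q$ is the directed graph on $[n]$ with arcs $(i,\sigma(i))$, $i\in I$; its connected components are directed paths $i_1\to\cdots\to i_p$ with $i_1<\cdots<i_p$, called chains. Notation: $i^+:=\sigma(i)$ for $i\in I$, $j^-:=\sigma^{-1}(j)$ for $j\in\sigma(I)$; $S_h=[n]\setminus I$ (chain heads), $S_t=[n]\setminus\sigma(I)$ (chain tails). Belitskii order on positions $\{(i,j):1\le i<j\le n\}$: $(i,j)\prec(i',j')$ iff $i>i'$, or $i=i'$ and $j<j'$. Belitskii's algorithm for $B_n$-similarity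 on $N_n$: given $A\in N_n$ put $A^{(0)}=A$, $G^{(0)}=B_n$. For $k=0,1,\dots$, let $(p,q)$ be the $(k+1)$th position in Belitskii order and look at the $(p,q)$ entries of all matrices $G^{(k)}$-similar to $A^{(k)}$: (a) if this entry is always $0$ or can take every value of $\mathbb F$, choose $A^{(k+1)}$ $G^{(k)}$-similar to $A^{(k)}$ with that entry $0$; (b) if it takes exactly the values of $\mathbb F\setminus\{0\}$, choose $A^{(k+1)}$ with that entry $1$; (c) otherwise it is a constant $\lambda\ne0$ and $A^{(k+1)}=A^{(k)}$. $G^{(k+1)}$ is the subgroup of $g\in G^{(k)}$ such that $gA^{(k+1)}g^{-1}$ agrees with $A^{(k+1)}$ in the first $k+1$ positions. The final matrix is the Belitskii canonical form of $A$; a matrix is a Belitskii canonical form if it is the Belitskii canonical form of some matrix. *)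

theory Defs
  imports Main
begin

text \<open>n x n matrices over a field are represented as functions nat => nat => 'a,
  indexed by 1..n, with all entries outside [n] x [n] equal to zero.\<close>

type_synonym 'a mat = "nat \<Rightarrow> nat \<Rightarrow> 'a"

definition is_mat :: "nat \<Rightarrow> 'a::zero mat \<Rightarrow> bool" where
  "is_mat n M \<longleftrightarrow> (\<forall>i j. (i \<notin> {1..n} \<or> j \<notin> {1..n}) \<longrightarrow> M i j = 0)"

definition mmul :: "nat \<Rightarrow> 'a::field mat \<Rightarrow> 'a mat \<Rightarrow> 'a mat" where
  "mmul n A B = (\<lambda>i j. \<Sum>k\<in>{1..n}. A i k * B k j)"

definition idm :: "nat \<Rightarrow> 'a::field mat" where
  "idm n = (\<lambda>i j. if i = j \<and> i \<in> {1..n} then 1 else 0)"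

definition minv :: "nat \<Rightarrow> 'a::field mat \<Rightarrow> 'a mat" where
  "minv n g = (SOME h. is_mat n h \<and> mmul n g h = idm n \<and> mmul n h g = idm n)"

definition conj :: "nat \<Rightarrow> 'a::field mat \<Rightarrow> 'a mat \<Rightarrow> 'a mat" where
  "conj n g A = mmul n (mmul n g A) (minv n g)"

definition Bn :: "nat \<Rightarrow> 'a::field mat set" where
  "Bn n = {g. is_mat n g \<and> (\<forall>i j. j < i \<longrightarrow> g i j = 0) \<and> (\<forall>i\<in>{1..n}. g i i \<noteq> 0)}"

definition Un_n :: "nat \<Rightarrow> 'a::field mat set" where
  "Un_n n = {g. is_mat n g \<and> (\<forall>i j. j < i \<longrightarrow> g i j = 0) \<and> (\<forall>i\<in>{1..n}. g i i = 1)}"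

definition Nn :: "nat \<Rightarrow> 'a::field mat set" where
  "Nn n = {M. is_mat n M \<and> (\<forall>i j. j \<le> i \<longrightarrow> M i j = 0)}"

definition QUn :: "nat \<Rightarrow> 'a::field mat \<Rightarrow> 'a mat set" where
  "QUn n Q = {mmul n Q U | U. U \<in> Un_n n}"

definition subperm :: "nat set \<Rightarrow> (nat \<Rightarrow> nat) \<Rightarrow> 'a::field mat" where
  "subperm I \<sigma> = (\<lambda>i j. if i \<in> I \<and> j = \<sigma> i then 1 else 0)"

definition bel_less :: "nat \<times> nat \<Rightarrow> nat \<times> nat \<Rightarrow> bool" where
  "bel_less p p' \<longleftrightarrow> fst p > fst p' \<or> (fst p = fst p' \<and> snd p < snd p')"

definition bel_positions :: "nat \<Rightarrow> (nat \<times> nat) list" where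
  "bel_positions n = concat (map (\<lambda>i. map (\<lambda>j. (i, j)) [Suc i..<Suc n]) (rev [1..<n]))"

definition orbit :: "nat \<Rightarrow> 'a::field mat set \<Rightarrow> 'a mat \<Rightarrow> 'a mat set" where
  "orbit n G A = {conj n g A | g. g \<in> G}"

definition bel_step :: "nat \<Rightarrow> nat \<times> nat \<Rightarrow> 'a::field mat set \<Rightarrow> 'a mat \<Rightarrow> 'a mat \<Rightarrow> bool" where
  "bel_step n pq G A A' \<longleftrightarrow>
     (let V = {M (fst pq) (snd pq) | M. M \<in> orbit n G A} in
      if V = {0} \<or> V = UNIV then A' \<in> orbit n G A \<and> A' (fst pq) (snd pq) = 0
      else if V = UNIV - {0} then A' \<in> orbit n G A \<and> A' (fst pq) (snd pq) = 1
      else A' = A)"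

definition bel_stab :: "nat \<Rightarrow> nat \<Rightarrow> 'a::field mat set \<Rightarrow> 'a mat \<Rightarrow> 'a mat set" where
  "bel_stab n k G A' = {g \<in> G. \<forall>m \<le> k.
      conj n g A' (fst (bel_positions n ! m)) (snd (bel_positions n ! m))
        = A' (fst (bel_positions n ! m)) (snd (bel_positions n ! m))}"

definition bel_run :: "nat \<Rightarrow> 'a::field mat \<Rightarrow> (nat \<Rightarrow> 'a mat) \<Rightarrow> (nat \<Rightarrow> 'a mat set) \<Rightarrow> bool" where
  "bel_run n A As Gs \<longleftrightarrow>
     As 0 = A \<and> Gs 0 = Bn n \<and>
     (\<forall>k < length (bel_positions n).
        bel_step n (bel_positions n ! k) (Gs k) (As k) (As (Suc k)) \<and>
        Gs (Suc k) = bel_stab n k (Gs k) (As (Suc k)))"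

definition bel_cf_of :: "nat \<Rightarrow> 'a::field mat \<Rightarrow> 'a mat \<Rightarrow> bool" where
  "bel_cf_of n A C \<longleftrightarrow> A \<in> Nn n \<and>
     (\<exists>As Gs. bel_run n A As Gs \<and> As (length (bel_positions n)) = C)"

definition is_bel_cf :: "nat \<Rightarrow> 'a::field mat \<Rightarrow> bool" where
  "is_bel_cf n C \<longleftrightarrow> (\<exists>A. bel_cf_of n A C)"

text \<open>Chains of G_Q: connected components of the graph with arcs (i, sigma i), i in I.\<close>
definition same_chain :: "nat set \<Rightarrow> (nat \<Rightarrow> nat) \<Rightarrow> nat \<Rightarrow> nat \<Rightarrow> bool" where
  "same_chain I \<sigma> j j' \<longleftrightarrow>
     (j, j') \<in> ({(i, \<sigma> i) | i. i \<in> I} \<union> {(\<sigma> i, i) | i. i \<in> I})\<^sup>*"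

end

theory Submission
  imports Defs "HOL-Library.Function_Algebras"
begin

text \<open>Row i of A = QU is row \<sigma> i of U (or zero if i is a chain head), so a nonzero a_{ij} forces
  i \<in> I, j \<ge> \<sigma> i, and a_{i \<sigma> i} = 1. The other entries are controlled by case (a) of
  Belitskii's algorithm: an entry is 0 in the canonical form as soon as a one-parameter family in
  B_n fixes all earlier entries and translates it. Transvections I + y e_c^T supply such families,
  with c = j when j is a chain head, and with c = j^- when j^- > i. Hence every column j with
  a_{ij} \<noteq> 0 satisfies \<sigma> i \<le> j and j^- \<le> i, and two distinct vertices of a chain cannot
  both do so: the predecessor of the later one would lie between \<sigma> i and i.\<close>

section \<open>Triangular matrices\<close>

lemma mmul_assoc: "mmul n (mmul n A B) C = mmul n A (mmul n B C)"
  unfolding mmul_def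
  by (auto simp: sum_distrib_left sum_distrib_right mult.assoc intro!: ext sum.swap[THEN trans])

lemma mmul_idm_left:
  assumes "is_mat n B"
  shows "mmul n (idm n) B = B"
proof (intro ext)
  fix i j
  show "mmul n (idm n) B i j = B i j"
    using assms unfolding mmul_def idm_def is_mat_def
    by (cases "i \<in> {1..n}") (auto simp: if_distrib[of "\<lambda>x. x * _"] sum.delta cong: if_cong)
qed

lemma mmul_idm_right:
  assumes "is_mat n B"
  shows "mmul n B (idm n) = B"
proof (intro ext)
  fix i j
  show "mmul n B (idm n) i j = B i j"
    using assms unfolding mmul_def idm_def is_mat_def
    by (cases "j \<in> {1..n}") (auto simp: if_distrib[of "\<lambda>x. _ * x"] sum.delta' cong: if_cong)
qed

lemma mmul_add_left: "mmul n (A + B) C = mmul n A C + mmul n B C"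
  by (auto simp: mmul_def distrib_right sum.distrib intro!: ext)

lemma mmul_diff_right: "mmul n A (B - C) = mmul n A B - mmul n A C"
  by (auto simp: mmul_def right_diff_distrib sum_subtractf intro!: ext)

lemma mmul_eq_0_entry:
  "(\<And>k. k \<in> {1..n} \<Longrightarrow> A p k = 0 \<or> B k q = 0) \<Longrightarrow> mmul n A B p q = 0"
  unfolding mmul_def by (intro sum.neutral) auto

lemma is_mat_mmul: "is_mat n A \<Longrightarrow> is_mat n B \<Longrightarrow> is_mat n (mmul n A B)"
  unfolding is_mat_def by (auto intro!: mmul_eq_0_entry)

function upper_inv :: "nat \<Rightarrow> 'a::field mat \<Rightarrow> nat \<Rightarrow> nat \<Rightarrow> 'a" where
  "upper_inv n g p q = (if p \<in> {1..n} \<and> q \<in> {1..n} \<and> p \<le> q then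
     (if p = q then inverse (g p p)
      else - (\<Sum>k\<in>{Suc p..q}. g p k * upper_inv n g k q) / g p p) else 0)"
  by auto
termination by (relation "measure (\<lambda>(n, g, p, q). q - p)") auto

declare upper_inv.simps [simp del]

lemma upper_inv_Bn:
  assumes "g \<in> Bn n"
  shows "upper_inv n g \<in> Bn n"
proof -
  have "upper_inv n g p q = 0" if "p \<notin> {1..n} \<or> q \<notin> {1..n} \<or> q < p" for p q
    using that by (subst upper_inv.simps) auto
  moreover have "upper_inv n g p p \<noteq> 0" if "p \<in> {1..n}" for p
    using assms that unfolding Bn_def by (subst upper_inv.simps) auto
  ultimately show ?thesis unfolding Bn_def is_mat_def by blast
qed

lemma mmul_upper_inv_right:
  assumes "g \<in> Bn n"
  shows "mmul n g (upper_inv n g) = idm n"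
proof (intro ext)
  fix p q
  have gu: "\<And>i j. j < i \<Longrightarrow> g i j = 0" and gd: "\<And>i. i \<in> {1..n} \<Longrightarrow> g i i \<noteq> 0"
    using assms unfolding Bn_def by auto
  have R: "upper_inv n g \<in> Bn n" by (rule upper_inv_Bn[OF assms])
  show "mmul n g (upper_inv n g) p q = idm n p q"
  proof (cases "p \<in> {1..n} \<and> q \<in> {1..n} \<and> p \<le> q")
    case False
    have "g p k = 0 \<or> upper_inv n g k q = 0" for k
    proof (cases "p \<in> {1..n} \<and> q \<in> {1..n}")
      case True
      then show ?thesis using False gu[of k p] R unfolding Bn_def by (cases "k < p") auto
    next
      case False
      then show ?thesis using assms R unfolding Bn_def is_mat_def by auto
    qed
    then have "mmul n g (upper_inv n g) p q = 0" by (intro mmul_eq_0_entry)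
    then show ?thesis using False by (auto simp: idm_def)
  next
    case True
    note pq = this
    have "mmul n g (upper_inv n g) p q = (\<Sum>k\<in>{p..q}. g p k * upper_inv n g k q)"
      unfolding mmul_def using pq gu R unfolding Bn_def
      by (intro sum.mono_neutral_right) (auto simp: not_le)
    also have "\<dots> = g p p * upper_inv n g p q + (\<Sum>k\<in>{Suc p..q}. g p k * upper_inv n g k q)"
      using pq by (simp add: sum.atLeast_Suc_atMost)
    also have "\<dots> = idm n p q"
    proof (cases "p = q")
      case True
      then show ?thesis using pq gd[of p] by (subst upper_inv.simps) (simp add: idm_def)
    next
      case False
      then show ?thesis using pq gd[of p] by (subst upper_inv.simps) (simp add: idm_def)
    qed
    finally show ?thesis .
  qed
qed

lemma mmul_upper_inv_left:
  assumes "g \<in> Bn n"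
  shows "mmul n (upper_inv n g) g = idm n"
proof -
  let ?R = "upper_inv n g"
  have R: "?R \<in> Bn n" by (rule upper_inv_Bn[OF assms])
  have "is_mat n g" "is_mat n (upper_inv n ?R)"
    using assms upper_inv_Bn[OF R] unfolding Bn_def by auto
  then have "upper_inv n ?R = g"
    using mmul_upper_inv_right[OF assms] mmul_upper_inv_right[OF R]
    by (metis mmul_assoc mmul_idm_left mmul_idm_right)
  then show ?thesis using mmul_upper_inv_right[OF R] by simp
qed

lemma upper_inv_eqI:
  assumes "g \<in> Bn n" "is_mat n h" "mmul n g h = idm n"
  shows "upper_inv n g = h"
proof -
  have "is_mat n (upper_inv n g)" using upper_inv_Bn[OF assms(1)] unfolding Bn_def by auto
  then show ?thesis
    using assms mmul_upper_inv_left[OF assms(1)] by (metis mmul_assoc mmul_idm_left mmul_idm_right)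
qed

lemma minv_eq_upper_inv:
  assumes "g \<in> Bn n"
  shows "minv n g = upper_inv n g"
proof -
  have "is_mat n (upper_inv n g)" using upper_inv_Bn[OF assms] unfolding Bn_def by auto
  then have "\<exists>h. is_mat n h \<and> mmul n g h = idm n \<and> mmul n h g = idm n"
    using mmul_upper_inv_right[OF assms] mmul_upper_inv_left[OF assms] by blast
  then have "is_mat n (minv n g) \<and> mmul n g (minv n g) = idm n"
    unfolding minv_def by (rule someI2_ex) blast
  then show ?thesis using upper_inv_eqI[OF assms, of "minv n g"] by simp
qed

lemma minv_Bn: "g \<in> Bn n \<Longrightarrow> minv n g \<in> Bn n"
  by (simp add: minv_eq_upper_inv upper_inv_Bn)

lemma mmul_minv_right: "g \<in> Bn n \<Longrightarrow> mmul n g (minv n g) = idm n"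
  by (simp add: minv_eq_upper_inv mmul_upper_inv_right)

lemma minv_eqI: "g \<in> Bn n \<Longrightarrow> is_mat n h \<Longrightarrow> mmul n g h = idm n \<Longrightarrow> minv n g = h"
  by (simp add: minv_eq_upper_inv upper_inv_eqI)

lemma Bn_nonzero_entry:
  assumes "g \<in> Bn n" "g a b \<noteq> 0"
  shows "a \<in> {1..n}" "a \<le> b"
proof -
  have "is_mat n g" "\<not> b < a" using assms unfolding Bn_def by auto
  then show "a \<in> {1..n}" "a \<le> b" using assms(2) unfolding is_mat_def by auto
qed

lemma conj_Nn:
  assumes g: "g \<in> Bn n" and M: "M \<in> Nn n"
  shows "conj n g M \<in> Nn n"
proof -
  have gu: "\<And>i j. j < i \<Longrightarrow> g i j = 0" and Mu: "\<And>i j. j \<le> i \<Longrightarrow> M i j = 0"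
    using g M unfolding Bn_def Nn_def by auto
  have Ru: "\<And>i j. j < i \<Longrightarrow> minv n g i j = 0" using minv_Bn[OF g] unfolding Bn_def by auto
  have gM: "mmul n g M p k = 0" if "k \<le> p" for p k
    using gu[of _ p] Mu[of k] that by (intro mmul_eq_0_entry) (meson le_trans not_le)
  have "conj n g M p q = 0" if "q \<le> p" for p q
    unfolding conj_def using gM[of _ p] Ru[of q] that
    by (intro mmul_eq_0_entry) (meson le_less_trans not_le)
  moreover have "is_mat n (conj n g M)"
    unfolding conj_def using g M minv_Bn[OF g] unfolding Bn_def Nn_def by (intro is_mat_mmul) auto
  ultimately show ?thesis unfolding Nn_def by auto
qed

section \<open>Transvections\<close>

definition col_mat :: "nat \<Rightarrow> (nat \<Rightarrow> 'a::field) \<Rightarrow> 'a mat" where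
  "col_mat c y = (\<lambda>p q. if q = c then y p else 0)"

lemma mmul_col_mat_left: "c \<in> {1..n} \<Longrightarrow> mmul n (col_mat c y) M p q = y p * M c q"
  unfolding mmul_def col_mat_def by (simp add: if_distrib[of "\<lambda>x. x * _"] sum.delta' cong: if_cong)

lemma mmul_col_mat_right:
  "mmul n M (col_mat c y) p q = (if q = c then (\<Sum>a\<in>{1..n}. M p a * y a) else 0)"
  unfolding mmul_def col_mat_def by auto

context
  fixes n c :: nat and y :: "nat \<Rightarrow> 'a::field"
  assumes c: "c \<in> {1..n}" and y_supp: "\<And>p. y p \<noteq> 0 \<Longrightarrow> 1 \<le> p \<and> p < c"
begin

lemma transvection_Bn: "idm n + col_mat c y \<in> Bn n"
  using c y_supp unfolding Bn_def is_mat_def col_mat_def idm_def by force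

lemma is_mat_col_mat: "is_mat n (col_mat c y)"
  using c y_supp unfolding is_mat_def col_mat_def by force

lemma minv_transvection: "minv n (idm n + col_mat c y) = idm n - col_mat c y"
proof (rule minv_eqI[OF transvection_Bn])
  have Im: "is_mat n (idm n :: 'a mat)" unfolding is_mat_def idm_def by simp
  then show "is_mat n (idm n - col_mat c y)" using is_mat_col_mat unfolding is_mat_def by simp
  have "y c = 0" using y_supp[of c] by auto
  then have "mmul n (col_mat c y) (col_mat c y) = 0"
    by (intro ext) (simp add: mmul_col_mat_left[OF c], simp add: col_mat_def)
  then show "mmul n (idm n + col_mat c y) (idm n - col_mat c y) = idm n"
    by (simp add: mmul_add_left mmul_diff_right mmul_idm_left mmul_idm_right is_mat_col_mat Im)
qed

lemma conj_transvection:
  assumes M: "M \<in> Nn n"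
  shows "conj n (idm n + col_mat c y) M p q
           = M p q + y p * M c q - (if q = c then (\<Sum>a\<in>{1..n}. M p a * y a) else 0)"
proof -
  let ?X = "col_mat c y"
  have Mm: "is_mat n M" and Mu: "\<And>i j. j \<le> i \<Longrightarrow> M i j = 0" using M unfolding Nn_def by auto
  have "(\<Sum>a\<in>{1..n}. y p * M c a * y a) = 0"
    using y_supp Mu by (intro sum.neutral) (metis less_imp_le mult_not_zero)
  then have XMX: "mmul n (mmul n ?X M) ?X p q = 0"
    by (simp add: mmul_col_mat_right mmul_col_mat_left[OF c])
  have "conj n (idm n + ?X) M = M + mmul n ?X M - (mmul n M ?X + mmul n (mmul n ?X M) ?X)"
    unfolding conj_def minv_transvection
    by (simp add: mmul_add_left mmul_diff_right mmul_idm_left mmul_idm_right Mm is_mat_col_mat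
        is_mat_mmul algebra_simps)
  then show ?thesis using XMX by (simp add: mmul_col_mat_right mmul_col_mat_left[OF c])
qed

end

section \<open>Runs of Belitskii's algorithm\<close>

lemma set_bel_positions: "set (bel_positions n) = {(p, q). 1 \<le> p \<and> p < q \<and> q \<le> n}"
  unfolding bel_positions_def by (auto simp del: upt_Suc simp: image_iff)

lemma sorted_wrt_concat_map:
  assumes "sorted_wrt Q xs" "\<And>x. x \<in> set xs \<Longrightarrow> sorted_wrt R (f x)"
    "\<And>x y a b. Q x y \<Longrightarrow> a \<in> set (f x) \<Longrightarrow> b \<in> set (f y) \<Longrightarrow> R a b"
  shows "sorted_wrt R (concat (map f xs))"
  using assms by (induction xs) (auto simp: sorted_wrt_append)

lemma sorted_bel_positions: "sorted_wrt bel_less (bel_positions n)"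
  unfolding bel_positions_def
proof (rule sorted_wrt_concat_map[where Q = "(>)"])
  show "sorted_wrt (>) (rev [1..<n])" by (simp add: sorted_wrt_rev)
  show "sorted_wrt bel_less (map (Pair x) [Suc x..<Suc n])" for x
    unfolding sorted_wrt_map bel_less_def by (rule sorted_wrt_mono_rel[OF _ sorted_wrt_upt]) simp
  show "bel_less a b" if "x > y" "a \<in> set (map (Pair x) [Suc x..<Suc n])"
    "b \<in> set (map (Pair y) [Suc y..<Suc n])" for x y a b
    using that by (auto simp: bel_less_def)
qed

lemma bel_less_nth_iff:
  assumes "m < length (bel_positions n)" "k < length (bel_positions n)"
  shows "bel_less (bel_positions n ! m) (bel_positions n ! k) \<longleftrightarrow> m < k"
proof
  show "m < k \<Longrightarrow> bel_less (bel_positions n ! m) (bel_positions n ! k)"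
    using sorted_wrt_nth_less[OF sorted_bel_positions] assms by blast
  show "m < k" if "bel_less (bel_positions n ! m) (bel_positions n ! k)"
  proof (rule ccontr)
    assume "\<not> m < k"
    then have "k = m \<or> bel_less (bel_positions n ! k) (bel_positions n ! m)"
      using sorted_wrt_nth_less[OF sorted_bel_positions] assms by (metis nat_neq_iff)
    then show False using that by (auto simp: bel_less_def)
  qed
qed

definition agree_before :: "nat \<Rightarrow> 'a::field mat \<Rightarrow> 'a mat \<Rightarrow> nat \<Rightarrow> nat \<Rightarrow> bool" where
  "agree_before n A M p q \<longleftrightarrow>
     (\<forall>p' q'. 1 \<le> p' \<and> p' < q' \<and> q' \<le> n \<and> bel_less (p', q') (p, q) \<longrightarrow> M p' q' = A p' q')"

lemma agree_beforeD_lower_row: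
  "agree_before n A M p q \<Longrightarrow> p < r \<Longrightarrow> r < q' \<Longrightarrow> q' \<le> n \<Longrightarrow> M r q' = A r q'"
  unfolding agree_before_def bel_less_def by auto

lemma agree_beforeD_same_row:
  "agree_before n A M p q \<Longrightarrow> 1 \<le> p \<Longrightarrow> p < q' \<Longrightarrow> q' < q \<Longrightarrow> q \<le> n \<Longrightarrow> M p q' = A p q'"
  unfolding agree_before_def bel_less_def by auto

lemma row_sum_eq_if_agree_before:
  assumes A: "A \<in> Nn n" and M: "M \<in> Nn n" and agree: "agree_before n A M p q"
    and "1 \<le> p" "q \<le> n" and v_supp: "\<And>a. v a \<noteq> 0 \<Longrightarrow> a < q"
  shows "(\<Sum>a\<in>{1..n}. M p a * v a) = (\<Sum>a\<in>{1..n}. A p a * v a)"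
proof (intro sum.cong refl)
  fix a
  show "M p a * v a = A p a * v a"
  proof (cases "v a = 0 \<or> a \<le> p")
    case True
    then show ?thesis using A M unfolding Nn_def by auto
  next
    case False
    then show ?thesis using agree_beforeD_same_row[OF agree] v_supp[of a] assms(4,5) by auto
  qed
qed

locale belitskii_run =
  fixes n :: nat and A0 :: "'a::field mat" and As :: "nat \<Rightarrow> 'a mat" and Gs :: "nat \<Rightarrow> 'a mat set"
  assumes run: "bel_run n A0 As Gs" and A0_Nn: "A0 \<in> Nn n"
begin

abbreviation "P \<equiv> bel_positions n"
abbreviation "N \<equiv> length (bel_positions n)"
abbreviation "Af \<equiv> As N"
abbreviation entry :: "'a mat \<Rightarrow> nat \<times> nat \<Rightarrow> 'a" where "entry M pq \<equiv> M (fst pq) (snd pq)"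

lemma bel_step_nth: "k < N \<Longrightarrow> bel_step n (P ! k) (Gs k) (As k) (As (Suc k))"
  and Gs_Suc: "k < N \<Longrightarrow> Gs (Suc k) = bel_stab n k (Gs k) (As (Suc k))"
  using run unfolding bel_run_def by auto

lemma Gs_subset_Bn: "k \<le> N \<Longrightarrow> Gs k \<subseteq> Bn n"
proof (induction k)
  case 0
  then show ?case using run unfolding bel_run_def by auto
next
  case (Suc k)
  then show ?case using Gs_Suc[of k] unfolding bel_stab_def by auto
qed

lemma As_Suc_cases: "k < N \<Longrightarrow> As (Suc k) = As k \<or> (\<exists>g\<in>Gs k. As (Suc k) = conj n g (As k))"
  using bel_step_nth[of k] unfolding bel_step_def Let_def orbit_def by (auto split: if_splits)

lemma As_Nn: "k \<le> N \<Longrightarrow> As k \<in> Nn n"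
proof (induction k)
  case 0
  then show ?case using run A0_Nn unfolding bel_run_def by auto
next
  case (Suc k)
  then show ?case using As_Suc_cases[of k] conj_Nn Gs_subset_Bn[of k] by fastforce
qed

lemma As_frozen: "m < k \<Longrightarrow> k \<le> N \<Longrightarrow> entry (As k) (P ! m) = entry (As (Suc m)) (P ! m)"
proof (induction k)
  case 0
  then show ?case by simp
next
  case (Suc k)
  show ?case
  proof (cases "m < k")
    case False
    then show ?thesis using Suc.prems by (simp add: less_Suc_eq)
  next
    case True
    then obtain k' where k': "k = Suc k'" by (cases k) auto
    have "entry (As (Suc k)) (P ! m) = entry (As k) (P ! m)"
      using As_Suc_cases[of k] Gs_Suc[of k'] True k' Suc.prems unfolding bel_stab_def by auto
    then show ?thesis using Suc True by simp
  qed
qed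

lemma As_agree_before:
  assumes "m \<le> k" "k \<le> N" "m < N" "P ! m = (p, q)"
  shows "agree_before n Af (As k) p q"
  unfolding agree_before_def
proof (intro allI impI)
  fix p' q' assume pq': "1 \<le> p' \<and> p' < q' \<and> q' \<le> n \<and> bel_less (p', q') (p, q)"
  then obtain m' where m': "m' < N" "P ! m' = (p', q')"
    using set_bel_positions by (metis (mono_tags) case_prodI in_set_conv_nth mem_Collect_eq)
  then have "m' < m" using bel_less_nth_iff[of m' n m] assms pq' by auto
  then show "As k p' q' = Af p' q'"
    using As_frozen[of m' k] As_frozen[of m' N] m' assms by auto
qed

lemma Gs_memI:
  assumes "k \<le> N" "g \<in> Bn n"
    and "\<And>m' m. m' < k \<Longrightarrow> m \<le> m'
           \<Longrightarrow> entry (conj n g (As (Suc m'))) (P ! m) = entry (As (Suc m')) (P ! m)"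
  shows "g \<in> Gs k"
  using assms
proof (induction k)
  case 0
  then show ?case using run unfolding bel_run_def by auto
next
  case (Suc k)
  then show ?case using Gs_Suc[of k] unfolding bel_stab_def by auto
qed

lemma eq_0_if_orbit_entry_surj:
  assumes "k < N" "P ! k = (i, j)" "\<And>t. \<exists>g\<in>Gs k. conj n g (As k) i j = t"
  shows "Af i j = 0"
proof -
  have "t \<in> {M i j | M. M \<in> orbit n (Gs k) (As k)}" for t
  proof -
    obtain g where "g \<in> Gs k" "conj n g (As k) i j = t" using assms(3) by blast
    then show ?thesis unfolding orbit_def by blast
  qed
  then have "{M i j | M. M \<in> orbit n (Gs k) (As k)} = UNIV" by blast
  then have "As (Suc k) i j = 0"
    using bel_step_nth[OF assms(1)] assms(2) unfolding bel_step_def Let_def by auto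
  then show ?thesis using As_frozen[of k N] assms by simp
qed

text \<open>Case (a) of the algorithm. The family only has to fix earlier entries of matrices that agree
  with the canonical form before the entry in question, since every intermediate matrix of the
  run does.\<close>

lemma canonical_entry_eq_0:
  fixes g :: "'a \<Rightarrow> 'a mat"
  assumes ij: "1 \<le> i" "i < j" "j \<le> n"
    and g_Bn: "\<And>s. g s \<in> Bn n"
    and g_fix: "\<And>s M p q. M \<in> Nn n \<Longrightarrow> 1 \<le> p \<Longrightarrow> p < q \<Longrightarrow> q \<le> n \<Longrightarrow> bel_less (p, q) (i, j)
                  \<Longrightarrow> agree_before n Af M p q \<Longrightarrow> conj n (g s) M p q = M p q"
    and g_shift: "\<And>s M. M \<in> Nn n \<Longrightarrow> agree_before n Af M i j \<Longrightarrow> conj n (g s) M i j = M i j + s"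
  shows "Af i j = 0"
proof -
  obtain k where k: "k < N" "P ! k = (i, j)"
    using ij set_bel_positions by (metis (mono_tags) case_prodI in_set_conv_nth mem_Collect_eq)
  have g_Gs: "g s \<in> Gs k" for s
  proof (rule Gs_memI)
    fix m' m assume m: "m' < k" "m \<le> m'"
    obtain p q where pq: "P ! m = (p, q)" by fastforce
    have "m < N" using m k by simp
    then have "(p, q) \<in> set P" using pq by (metis nth_mem)
    then have "1 \<le> p" "p < q" "q \<le> n" unfolding set_bel_positions by auto
    moreover have "bel_less (p, q) (i, j)" using bel_less_nth_iff[of m n k] m k pq by auto
    moreover have "agree_before n Af (As (Suc m')) p q"
      using As_agree_before[of m "Suc m'"] m k pq by simp
    ultimately show "entry (conj n (g s) (As (Suc m'))) (P ! m) = entry (As (Suc m')) (P ! m)"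
      using g_fix As_Nn[of "Suc m'"] m k pq by simp
  qed (use k g_Bn in auto)
  have shift: "conj n (g s) (As k) i j = As k i j + s" for s
    using g_shift As_Nn[of k] As_agree_before[of k k] k by simp
  show ?thesis
  proof (rule eq_0_if_orbit_entry_surj[OF k])
    show "\<exists>h\<in>Gs k. conj n h (As k) i j = t" for t
      using g_Gs shift[of "t - As k i j"] by force
  qed
qed

text \<open>Under conjugation by I + s v e_c^T the (p, q) entry changes by
  s (v_p M_{cq} - [q = c] (M v)_p); the hypotheses make this change vanish before (i, j) and
  equal s at (i, j).\<close>

lemma canonical_entry_eq_0_transvection:
  fixes v :: "nat \<Rightarrow> 'a"
  assumes ij: "1 \<le> i" "i < j" "j \<le> n" and c: "c \<in> {1..n}"
    and v_supp: "\<And>a. v a \<noteq> 0 \<Longrightarrow> 1 \<le> a \<and> a < c"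
    and fix_earlier: "\<And>M p q. M \<in> Nn n \<Longrightarrow> 1 \<le> p \<Longrightarrow> p < q \<Longrightarrow> q \<le> n
           \<Longrightarrow> bel_less (p, q) (i, j) \<Longrightarrow> agree_before n Af M p q
           \<Longrightarrow> v p * M c q = (if q = c then (\<Sum>a\<in>{1..n}. M p a * v a) else 0)"
    and shift: "\<And>M. M \<in> Nn n \<Longrightarrow> agree_before n Af M i j
           \<Longrightarrow> v i * M c j - (if j = c then (\<Sum>a\<in>{1..n}. M i a * v a) else 0) = 1"
  shows "Af i j = 0"
proof (rule canonical_entry_eq_0[where g = "\<lambda>s. idm n + col_mat c (\<lambda>a. s * v a)"])
  fix s :: 'a
  have sv_supp: "1 \<le> a \<and> a < c" if "s * v a \<noteq> 0" for a using v_supp that by simp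
  have scaled: "(\<Sum>a\<in>{1..n}. M p a * (s * v a)) = s * (\<Sum>a\<in>{1..n}. M p a * v a)" for M p
    by (simp add: sum_distrib_left ac_simps)
  show "idm n + col_mat c (\<lambda>a. s * v a) \<in> Bn n"
    using transvection_Bn[where y = "\<lambda>a. s * v a", OF c sv_supp] .
  show "conj n (idm n + col_mat c (\<lambda>a. s * v a)) M p q = M p q"
    if "M \<in> Nn n" "1 \<le> p" "p < q" "q \<le> n" "bel_less (p, q) (i, j)" "agree_before n Af M p q"
    for M p q
  proof -
    have "(if q = c then (\<Sum>a\<in>{1..n}. M p a * (s * v a)) else 0) = s * (v p * M c q)"
      unfolding scaled fix_earlier[OF that] by simp
    then show ?thesis using conj_transvection[where y = "\<lambda>a. s * v a", OF c sv_supp that(1)] by simp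
  qed
  show "conj n (idm n + col_mat c (\<lambda>a. s * v a)) M i j = M i j + s"
    if "M \<in> Nn n" "agree_before n Af M i j" for M
  proof -
    have "s * v i * M c j - (if j = c then (\<Sum>a\<in>{1..n}. M i a * (s * v a)) else 0)
        = s * (v i * M c j - (if j = c then (\<Sum>a\<in>{1..n}. M i a * v a) else 0))"
      unfolding scaled by (simp add: algebra_simps)
    then show ?thesis
      using shift[OF that] conj_transvection[where y = "\<lambda>a. s * v a", OF c sv_supp that(1)] by simp
  qed
qed (use ij in auto)

end

section \<open>Canonical forms in QU_n\<close>

locale QU_canonical_form = belitskii_run +
  fixes I :: "nat set" and \<sigma> :: "nat \<Rightarrow> nat" and U :: "'a mat"
  assumes I_subset: "I \<subseteq> {1..n}" and inj_\<sigma>: "inj_on \<sigma> I" and \<sigma>_range: "\<forall>i\<in>I. i < \<sigma> i \<and> \<sigma> i \<le> n"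
    and U_Un: "U \<in> Un_n n" and Af_QU: "Af = mmul n (subperm I \<sigma>) U"
begin

lemma Af_entry: "Af p q = (if p \<in> I then U (\<sigma> p) q else 0)"
proof (cases "p \<in> I")
  case True
  then have "\<sigma> p \<in> {1..n}" using \<sigma>_range I_subset by force
  then show ?thesis
    using True unfolding Af_QU mmul_def subperm_def
    by (simp add: if_distrib[of "\<lambda>x. x * _"] sum.delta' cong: if_cong)
qed (simp add: Af_QU mmul_def subperm_def)

lemma Af_Nn: "Af \<in> Nn n"
  using As_Nn by simp

lemma nonzero_entry_shape:
  assumes "Af i j \<noteq> 0"
  shows "i \<in> I" "\<sigma> i \<le> j" "j = \<sigma> i \<Longrightarrow> Af i j = 1"
proof -
  show iI: "i \<in> I" using assms Af_entry by (auto split: if_splits)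
  have "U (\<sigma> i) j \<noteq> 0" using assms iI by (simp add: Af_entry)
  then have "\<not> j < \<sigma> i" using U_Un unfolding Un_n_def by auto
  then show "\<sigma> i \<le> j" by simp
  show "j = \<sigma> i \<Longrightarrow> Af i j = 1"
    using U_Un iI \<sigma>_range I_subset unfolding Af_entry Un_n_def by force
qed

lemma nonzero_entry_bounds:
  assumes "Af i j \<noteq> 0"
  shows "1 \<le> i" "j \<le> n"
  using assms Af_Nn unfolding Nn_def is_mat_def by auto

lemma U_Bn: "U \<in> Bn n"
  using U_Un unfolding Un_n_def Bn_def by auto

lemma mmul_Af_minv_U: "mmul n Af (minv n U) = subperm I \<sigma>"
proof -
  note U_Bn
  moreover have "is_mat n (subperm I \<sigma>)"
    using I_subset \<sigma>_range unfolding is_mat_def subperm_def by fastforce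
  ultimately show ?thesis using mmul_minv_right mmul_idm_right by (metis Af_QU mmul_assoc)
qed

text \<open>Adding to column j the combination -s U^{-1} e_{\<sigma> i} of columns translates the (i, j)
  entry by s. Earlier entries do not move: row j of QU is zero, and no row other than i of QU
  has its leading 1 in column \<sigma> i.\<close>

lemma nonzero_entry_column_not_head:
  assumes nz: "Af i j \<noteq> 0" and lt: "\<sigma> i < j"
  shows "j \<in> I"
proof (rule ccontr)
  assume jI: "j \<notin> I"
  have iI: "i \<in> I" using nonzero_entry_shape[OF nz] by simp
  have i1: "1 \<le> i" and jn: "j \<le> n" using nonzero_entry_bounds[OF nz] by auto
  define v where "v a = - minv n U a (\<sigma> i)" for a
  have v_supp: "1 \<le> a \<and> a < j" if "v a \<noteq> 0" for a
    using Bn_nonzero_entry[OF minv_Bn[OF U_Bn], of a "\<sigma> i"] that lt unfolding v_def by auto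
  have row_sum: "(\<Sum>a\<in>{1..n}. Af p a * v a) = - subperm I \<sigma> p (\<sigma> i)" for p
    using mmul_Af_minv_U[THEN fun_cong, THEN fun_cong, of p "\<sigma> i"]
    unfolding v_def mmul_def by (simp add: sum_negf)
  have "Af i j = 0"
  proof (rule canonical_entry_eq_0_transvection[where c = j and v = v])
    show "1 \<le> i" "i < j" "j \<le> n" "j \<in> {1..n}" using i1 iI \<sigma>_range lt jn by auto
    show "1 \<le> a \<and> a < j" if "v a \<noteq> 0" for a using v_supp[OF that] .
  next
    fix M p q
    assume M: "M \<in> Nn n" and pq: "1 \<le> p" "p < q" "q \<le> n" and before: "bel_less (p, q) (i, j)"
      and agree: "agree_before n Af M p q"
    have "v p * M j q = 0"
    proof (cases "v p = 0 \<or> q \<le> j")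
      case True
      then show ?thesis using M unfolding Nn_def by auto
    next
      case False
      then have "M j q = Af j q" using agree_beforeD_lower_row[OF agree] v_supp[of p] pq by auto
      then show ?thesis using jI by (simp add: Af_entry)
    qed
    moreover have "(\<Sum>a\<in>{1..n}. M p a * v a) = 0" if "q = j"
    proof -
      have "p \<noteq> i" using before that unfolding bel_less_def by auto
      then have "subperm I \<sigma> p (\<sigma> i) = 0" using inj_\<sigma> iI by (auto simp: subperm_def dest: inj_onD)
      moreover have "(\<Sum>a\<in>{1..n}. M p a * v a) = (\<Sum>a\<in>{1..n}. Af p a * v a)"
        by (rule row_sum_eq_if_agree_before[OF Af_Nn M agree]) (use pq v_supp that in auto)
      ultimately show ?thesis using row_sum[of p] by simp
    qed
    ultimately show "v p * M j q = (if q = j then (\<Sum>a\<in>{1..n}. M p a * v a) else 0)"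
      by (cases "q = j") simp_all
  next
    fix M
    assume M: "M \<in> Nn n" and agree: "agree_before n Af M i j"
    have "(\<Sum>a\<in>{1..n}. M i a * v a) = (\<Sum>a\<in>{1..n}. Af i a * v a)"
      by (rule row_sum_eq_if_agree_before[OF Af_Nn M agree]) (use i1 jn v_supp in auto)
    also have "\<dots> = - 1" using row_sum[of i] iI by (simp add: subperm_def)
    finally show "v i * M j j - (if j = j then (\<Sum>a\<in>{1..n}. M i a * v a) else 0) = 1"
      using M unfolding Nn_def by simp
  qed
  with nz show False by simp
qed

text \<open>If column j > \<sigma> i is \<sigma> b with b > i, adding s times column i to column b translates the
  (i, j) entry by s A_{bj} = s, and the zeros U_{jq} (q < j) in row b of QU protect all
  earlier entries.\<close>

lemma nonzero_entry_column_pred_less: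
  assumes nz: "Af i j \<noteq> 0" and lt: "\<sigma> i < j" and j: "j \<in> \<sigma> ` I"
  shows "the_inv_into I \<sigma> j < i"
proof (rule ccontr)
  define b where "b = the_inv_into I \<sigma> j"
  assume "\<not> the_inv_into I \<sigma> j < i"
  then have "i \<le> b" unfolding b_def by simp
  have bI: "b \<in> I" and \<sigma>b: "\<sigma> b = j"
    using j inj_\<sigma> unfolding b_def by (auto simp: the_inv_into_f_f the_inv_into_into)
  have ib: "i < b" using \<open>i \<le> b\<close> \<sigma>b lt by (cases "i = b") auto
  have bj: "b < j" using \<sigma>_range bI \<sigma>b by auto
  have iI: "i \<in> I" using nonzero_entry_shape[OF nz] by simp
  have i1: "1 \<le> i" and jn: "j \<le> n" using nonzero_entry_bounds[OF nz] by auto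
  have b: "b \<in> {1..n}" using bI I_subset by auto
  define v where "v a = (if a = i then 1 else 0 :: 'a)" for a :: nat
  have row_sum: "(\<Sum>a\<in>{1..n}. M p a * v a) = M p i" for M :: "'a mat" and p
    using i1 ib b unfolding v_def by (simp add: if_distrib[of "\<lambda>x. _ * x"] sum.delta' cong: if_cong)
  have "Af i j = 0"
  proof (rule canonical_entry_eq_0_transvection[where c = b and v = v])
    show "1 \<le> i" "i < j" "j \<le> n" "b \<in> {1..n}" using i1 iI \<sigma>_range lt jn b by auto
    show "1 \<le> a \<and> a < b" if "v a \<noteq> 0" for a
      using that i1 ib unfolding v_def by (auto split: if_splits)
  next
    fix M p q
    assume M: "M \<in> Nn n" and pq: "1 \<le> p" "p < q" "q \<le> n" and before: "bel_less (p, q) (i, j)"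
      and agree: "agree_before n Af M p q"
    have "v p * M b q = 0"
    proof (cases "p = i \<and> b < q")
      case True
      then have "M b q = Af b q" using agree_beforeD_lower_row[OF agree] ib pq by auto
      also have "\<dots> = U j q" using bI \<sigma>b by (simp add: Af_entry)
      also have "\<dots> = 0" using True before U_Un unfolding bel_less_def Un_n_def by auto
      finally show ?thesis by simp
    next
      case False
      then show ?thesis using M unfolding v_def Nn_def by auto
    qed
    moreover have "M p i = 0" using before M unfolding bel_less_def Nn_def by auto
    ultimately show "v p * M b q = (if q = b then (\<Sum>a\<in>{1..n}. M p a * v a) else 0)"
      using row_sum[of M p] by (cases "q = b") simp_all
  next
    fix M
    assume M: "M \<in> Nn n" and agree: "agree_before n Af M i j"
    have "M b j = Af b j" using agree_beforeD_lower_row[OF agree] ib bj jn by auto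
    also have "\<dots> = 1" using bI \<sigma>b U_Un jn lt unfolding Un_n_def by (simp add: Af_entry)
    finally show "v i * M b j - (if j = b then (\<Sum>a\<in>{1..n}. M i a * v a) else 0) = 1"
      using bj by (simp add: v_def)
  qed
  with nz show False by simp
qed

lemma nonzero_entry_column_bounds:
  assumes "Af i j \<noteq> 0"
  shows "\<sigma> i \<le> j" "j \<in> \<sigma> ` I \<Longrightarrow> the_inv_into I \<sigma> j \<le> i"
proof -
  show "\<sigma> i \<le> j" using nonzero_entry_shape(2)[OF assms] .
  show "the_inv_into I \<sigma> j \<le> i" if "j \<in> \<sigma> ` I"
  proof (cases "j = \<sigma> i")
    case True
    then show ?thesis using nonzero_entry_shape(1)[OF assms] inj_\<sigma> by (simp add: the_inv_into_f_f)
  next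
    case False
    then show ?thesis
      using nonzero_entry_column_pred_less[OF assms _ that] \<open>\<sigma> i \<le> j\<close> by simp
  qed
qed

lemma nonzero_entry_trichotomy:
  assumes nz: "Af i j \<noteq> 0" and j: "j \<in> {1..n}"
  shows "i \<in> I \<and>
    ((j = \<sigma> i \<and> Af i j = 1)
     \<or> (j \<in> ({1..n} - \<sigma> ` I) - ({1..n} - I) \<and> \<sigma> i < j)
     \<or> (j \<notin> ({1..n} - \<sigma> ` I) \<union> ({1..n} - I) \<and> the_inv_into I \<sigma> j < i \<and> i < \<sigma> i \<and> \<sigma> i < j))"
proof -
  have iI: "i \<in> I" and "\<sigma> i \<le> j" using nonzero_entry_shape[OF nz] by auto
  then consider "j = \<sigma> i" | "\<sigma> i < j" by fastforce
  then show ?thesis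
  proof cases
    case 1
    then show ?thesis using iI nonzero_entry_shape(3)[OF nz] by simp
  next
    case 2
    then have "j \<in> I" by (rule nonzero_entry_column_not_head[OF nz])
    moreover have "j \<in> \<sigma> ` I \<Longrightarrow> the_inv_into I \<sigma> j < i"
      using nonzero_entry_column_pred_less[OF nz 2] .
    ultimately show ?thesis using iI 2 j \<sigma>_range by auto
  qed
qed

end

section \<open>Chains\<close>

lemma rtrancl_Un_converse_single_valued:
  assumes r: "single_valued r" and r_conv: "single_valued (r\<inverse>)"
    and "(x, y) \<in> (r \<union> r\<inverse>)\<^sup>*"
  shows "(x, y) \<in> r\<^sup>* \<or> (y, x) \<in> r\<^sup>*"
  using assms(3)
proof (induction rule: rtrancl_induct)
  case base
  then show ?case by simp
next
  case (step y z)
  from step.hyps(2) show ?case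
  proof
    assume yz: "(y, z) \<in> r"
    from step.IH show ?thesis
    proof
      assume "(y, x) \<in> r\<^sup>*"
      then show ?thesis using single_valued_confluent[OF r, of y x z] yz by auto
    qed (use yz in auto)
  next
    assume zy: "(y, z) \<in> r\<inverse>"
    from step.IH show ?thesis
    proof
      assume "(x, y) \<in> r\<^sup>*"
      then have "(y, x) \<in> (r\<inverse>)\<^sup>*" by (simp add: rtrancl_converse)
      then show ?thesis
        using single_valued_confluent[OF r_conv, of y x z] zy by (auto simp: rtrancl_converse)
    qed (use zy in \<open>auto intro: converse_rtrancl_into_rtrancl\<close>)
  qed
qed

lemma rtrancl_arcs_le:
  fixes \<sigma> :: "'a::order \<Rightarrow> 'a"
  assumes "\<forall>i\<in>I. i < \<sigma> i" and "(a, b) \<in> {(i, \<sigma> i) | i. i \<in> I}\<^sup>*"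
  shows "a \<le> b"
  using assms(2)
proof (induction rule: rtrancl_induct)
  case (step y z)
  then have "y \<in> I" "z = \<sigma> y" by auto
  then show ?case using assms(1) step.IH by (blast intro: order.trans less_imp_le)
qed simp

lemma same_chain_unique:
  assumes inj: "inj_on \<sigma> I" and incr: "\<forall>i\<in>I. i < \<sigma> i" and iI: "i \<in> I"
    and bounds: "\<And>x. x \<in> {j, j'} \<Longrightarrow> \<sigma> i \<le> x \<and> (x \<in> \<sigma> ` I \<longrightarrow> the_inv_into I \<sigma> x \<le> i)"
    and chain: "same_chain I \<sigma> j j'"
  shows "j = j'"
proof -
  define r where "r = {(i, \<sigma> i) | i. i \<in> I}"
  have conv: "{(\<sigma> i, i) | i. i \<in> I} = r\<inverse>" unfolding r_def by auto
  have "single_valued r" unfolding r_def by (auto intro: single_valuedI)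
  moreover have "single_valued (r\<inverse>)"
    unfolding r_def using inj by (auto intro!: single_valuedI dest: inj_onD)
  moreover have "(j, j') \<in> (r \<union> r\<inverse>)\<^sup>*" using chain unfolding same_chain_def conv r_def .
  ultimately have path: "(j, j') \<in> r\<^sup>* \<or> (j', j) \<in> r\<^sup>*"
    by (rule rtrancl_Un_converse_single_valued)
  have "a = b" if ab: "(a, b) \<in> r\<^sup>*" and vertices: "a \<in> {j, j'}" "b \<in> {j, j'}" for a b
  proof (rule ccontr)
    assume "a \<noteq> b"
    then obtain w where aw: "(a, w) \<in> r\<^sup>*" and wb: "(w, b) \<in> r"
      using ab by (meson rtranclE)
    have wI: "w \<in> I" and \<sigma>w: "\<sigma> w = b" using wb unfolding r_def by auto
    have "a \<le> w" using rtrancl_arcs_le[OF incr] aw unfolding r_def by blast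
    moreover have "the_inv_into I \<sigma> b = w" using inj wI \<sigma>w by (auto simp: the_inv_into_f_f)
    moreover have "\<sigma> i \<le> a" "the_inv_into I \<sigma> b \<le> i" using bounds vertices wI \<sigma>w by auto
    ultimately show False using incr iI by force
  qed
  then show ?thesis using path by blast
qed

theorem theorem4p8:
  fixes n :: nat and I :: "nat set" and \<sigma> :: "nat \<Rightarrow> nat" and A :: "'a::field mat"
  assumes "I \<subseteq> {1..n}" and "inj_on \<sigma> I" and "\<forall>i\<in>I. i < \<sigma> i \<and> \<sigma> i \<le> n"
    and "A \<in> QUn n (subperm I \<sigma>)" and "is_bel_cf n A"
  defines "Sh \<equiv> {1..n} - I" and "St \<equiv> {1..n} - \<sigma> ` I"
  shows "(\<forall>i\<in>{1..n}. \<forall>j\<in>{1..n}. A i j \<noteq> 0 \<longrightarrow>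
            i \<in> I \<and>
            ((j = \<sigma> i \<and> A i j = 1)
             \<or> (j \<in> St - Sh \<and> \<sigma> i < j)
             \<or> (j \<notin> St \<union> Sh \<and> the_inv_into I \<sigma> j < i \<and> i < \<sigma> i \<and> \<sigma> i < j)))
       \<and> (\<forall>i\<in>I. \<forall>j\<in>{1..n}. \<forall>j'\<in>{1..n}.
            same_chain I \<sigma> j j' \<and> A i j \<noteq> 0 \<and> A i j' \<noteq> 0 \<longrightarrow> j = j')"
proof -
  obtain U where U: "U \<in> Un_n n" and QU: "A = mmul n (subperm I \<sigma>) U"
    using assms(4) unfolding QUn_def by auto
  obtain A0 As Gs where run: "A0 \<in> Nn n" "bel_run n A0 As Gs"
    and A: "A = As (length (bel_positions n))"
    using assms(5) unfolding is_bel_cf_def bel_cf_of_def by auto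
  interpret QU_canonical_form n A0 As Gs I \<sigma> U
    using assms(1-3) U QU run A by unfold_locales auto
  have "j = j'" if "i \<in> I" "same_chain I \<sigma> j j'" "A i j \<noteq> 0" "A i j' \<noteq> 0" for i j j'
    using same_chain_unique[OF assms(2) _ \<open>i \<in> I\<close> _ \<open>same_chain I \<sigma> j j'\<close>] assms(3) that
      nonzero_entry_column_bounds unfolding A by blast
  then show ?thesis
    using nonzero_entry_trichotomy unfolding A Sh_def St_def by blast
qed

end
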